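(* For all integers $d\geq2$, $k\geq1$ and $j\in\{0,\dots,k-1\}$, \[ \frac{1}{(j+1)\prod_{\ell=1}^{k-j}\left(1+\frac{1}{d\ell}\right)}\leq k^{-1/d}. \] *)

theory Defs
  imports Complex_Main
begin

end

theory Submission
  imports Defs
begin

text \<open>By Bernoulli's inequality each factor satisfies \<open>(1 + 1/(d l))^d \<ge> 1 + 1/l\<close>, so the
  \<open>d\<close>-th power of the product dominates the telescoping product \<open>\<Prod>l=1..m. (1 + 1/l) = m + 1\<close>.
  Together with \<open>(j+1)^d \<ge> j+1\<close> and \<open>(j+1)(k-j+1) \<ge> k\<close> this gives
  \<open>((j+1) \<Prod>l=1..k-j. (1 + 1/(d l)))^d \<ge> k\<close>; take \<open>d\<close>-th roots and invert.\<close>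

lemma Bernoulli_inequality_divide:
  fixes x :: real and n :: nat
  assumes "x \<ge> 0" and "n \<ge> 1"
  shows "1 + x \<le> (1 + x / real n) ^ n"
proof -
  have "0 \<le> x / real n"
    using assms by simp
  then have "1 + real n * (x / real n) \<le> (1 + x / real n) ^ n"
    by (intro Bernoulli_inequality) linarith
  then show ?thesis
    using assms by simp
qed

lemma prod_one_plus_inverse:
  "(\<Prod>l = 1..m. (1 + 1 / real l)) = real m + 1"
  by (induction m) (simp_all add: field_simps)

lemma prod_one_plus_inverse_mult_power_ge:
  fixes d m :: nat
  assumes "d \<ge> 1"
  shows "real m + 1 \<le> (\<Prod>l = 1..m. (1 + 1 / (real d * real l))) ^ d"
proof -
  have "real m + 1 = (\<Prod>l = 1..m. (1 + 1 / real l))"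
    by (rule prod_one_plus_inverse [symmetric])
  also have "\<dots> \<le> (\<Prod>l = 1..m. (1 + 1 / (real d * real l)) ^ d)"
  proof (rule prod_mono)
    fix l assume "l \<in> {1..m}"
    have "1 + 1 / real l \<le> (1 + (1 / real l) / real d) ^ d"
      using assms by (intro Bernoulli_inequality_divide) auto
    then show "0 \<le> 1 + 1 / real l \<and> 1 + 1 / real l \<le> (1 + 1 / (real d * real l)) ^ d"
      by (simp add: mult.commute)
  qed
  also have "\<dots> = (\<Prod>l = 1..m. (1 + 1 / (real d * real l))) ^ d"
    by (simp add: prod_power_distrib)
  finally show ?thesis .
qed

lemma le_Suc_mult_diff_Suc:
  fixes j k :: nat
  shows "k \<le> (j + 1) * (k - j + 1)"
proof (cases "j \<le> k")
  case True
  then obtain i where "k = j + i"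
    using le_Suc_ex by blast
  then show ?thesis by (simp add: algebra_simps)
qed simp

lemma inverse_le_powr_of_le_power:
  fixes x y :: real and d :: nat
  assumes "x > 0" and "y > 0" and "d \<ge> 1" and "y \<le> x ^ d"
  shows "1 / x \<le> y powr (- 1 / real d)"
proof -
  have "y powr (1 / real d) \<le> (x ^ d) powr (1 / real d)"
    using assms by (intro powr_mono2) auto
  also have "\<dots> = x"
    using assms by (simp add: powr_realpow [symmetric] powr_powr)
  finally have "y powr (1 / real d) \<le> x" .
  then have "1 / x \<le> 1 / y powr (1 / real d)"
    using assms by (intro divide_left_mono) auto
  also have "\<dots> = y powr (- 1 / real d)"
    by (simp add: powr_minus_divide [symmetric])
  finally show ?thesis .
qed

theorem lemma8p2:
  fixes d k j :: nat
  assumes "d \<ge> 2" and "k \<ge> 1" and "j < k"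
  shows "1 / (real (j + 1) * (\<Prod>l = 1..k - j. (1 + 1 / (real d * real l))))
           \<le> real k powr (- 1 / real d)"
proof -
  define P where "P = (\<Prod>l = 1..k - j. (1 + 1 / (real d * real l)))"
  have "P > 0"
    unfolding P_def by (intro prod_pos) (auto simp: add_pos_nonneg)
  have "real k \<le> real ((j + 1) * (k - j + 1))"
    using le_Suc_mult_diff_Suc [of k j] by (simp only: of_nat_le_iff)
  also have "\<dots> = real (j + 1) * (real (k - j) + 1)"
    by (simp only: of_nat_mult of_nat_add of_nat_1)
  also have "\<dots> \<le> real (j + 1) ^ d * P ^ d"
    using assms prod_one_plus_inverse_mult_power_ge [of d "k - j"]
    by (intro mult_mono) (auto simp: P_def intro: self_le_power)
  also have "\<dots> = (real (j + 1) * P) ^ d"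
    by (simp add: power_mult_distrib)
  finally have "real k \<le> (real (j + 1) * P) ^ d" .
  with \<open>P > 0\<close> assms show ?thesis
    unfolding P_def by (intro inverse_le_powr_of_le_power) auto
qed

end
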